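(* Fix weights $w_1,\dots,w_D>0$. For $n,N\ge 1$ let $Z_{n,N}(w_1,\dots,w_D)=\sum_{\tau}\prod_{e\in\tau}w(e)$, the sum over all perfect matchings $\tau$ of the $N$-fold blow-up $\mathbb T(n,\Lambda)_N$ of the torus $\mathbb T(n,\Lambda)$, where every lift of an edge of type $e_i$ has weight $w_i$. Then $$\lim_{n\to\infty}\lim_{N\to\infty}\frac{1}{Nn^d}\log\frac{Z_{n,N}(w_1,\dots,w_D)}{(N!)^{n^d}}=\log(w_1+\dots+w_D).$$
   Context: $\Lambda$ is a bipartite graph embedded in $\mathbb R^d$ of the following form (or a linear image of one): there are vectors $e_1,\dots,e_D\in\mathbb R^d$ spanning $\mathbb R^d$ with $\sum_{i=1}^D e_i=0$ and a vector $v_0$ with $e_i\in v_0+\mathbb Z^d$ for all $i$; the white vertices are $W=\mathbb Z^d$, the black vertices are $B=\mathbb Z^d+v_0$, and each white vertex $w$ is joined by an edge exactly to the black vertices $w+e_1,\dots,w+e_D$; $\Lambda$ is connected. An edge from $w$ to $w+e_i$ is said to be of type $e_i$. The torus $\mathbb T(n,\Lambda)=\Lambda/n\mathbb Z^d$ has $n^d$ white and $n^d$ black vertices and every vertex has degree $D$. The $N$-fold blow-up $G_N$ of a graph $G$ replaces every vertex by $N$ copies (lifts) and every edge $(u,v)$ by the complete bipartite graph between the lifts of $u$ and the lifts of $v$. *)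

theory Defs
  imports "HOL-Analysis.Analysis"
begin

definition Zd :: "(real^'d) set" where
  "Zd = {x. \<forall>k. x $ k \<in> \<int>}"

text \<open>The infinite bipartite graph Lambda: white vertices Inl w (w in Z^d),
  black vertices Inr b (b in Z^d + v0); white w adjacent to black w + e i, i < D.\<close>
definition lattice_vertices :: "real^'d \<Rightarrow> (real^'d + real^'d) set" where
  "lattice_vertices v0 = Inl ` Zd \<union> Inr ` ((\<lambda>z. z + v0) ` Zd)"

definition lattice_adj ::
  "nat \<Rightarrow> (nat \<Rightarrow> real^'d) \<Rightarrow> ((real^'d + real^'d) \<times> (real^'d + real^'d)) set" where
  "lattice_adj D e =
     {(Inl w, Inr b) | w b. w \<in> Zd \<and> (\<exists>i<D. b = w + e i)} \<union>
     {(Inr b, Inl w) | w b. w \<in> Zd \<and> (\<exists>i<D. b = w + e i)}"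

definition lattice_connected :: "nat \<Rightarrow> (nat \<Rightarrow> real^'d) \<Rightarrow> real^'d \<Rightarrow> bool" where
  "lattice_connected D e v0 =
     (\<forall>x\<in>lattice_vertices v0. \<forall>y\<in>lattice_vertices v0. (x, y) \<in> (lattice_adj D e)\<^sup>*)"

text \<open>Torus T(n,Lambda): white vertices = representatives of Z^d / nZ^d; black vertices
  v0 + z likewise represented by z in the same set of representatives.\<close>
definition torus_reps :: "nat \<Rightarrow> (int^'d) set" where
  "torus_reps n = {w. \<forall>k. 0 \<le> w $ k \<and> w $ k < int n}"

text \<open>Black endpoint (as representative z, meaning the class of v0 + z) of the type-i edge at white w.\<close>
definition torus_target :: "nat \<Rightarrow> (nat \<Rightarrow> real^'d) \<Rightarrow> real^'d \<Rightarrow> int^'d \<Rightarrow> nat \<Rightarrow> int^'d" where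
  "torus_target n e v0 w i = (\<chi> k. (w $ k + \<lfloor>(e i - v0) $ k\<rfloor>) mod int n)"

text \<open>Edges of the N-fold blow-up of the torus: (w, i, k, l) is the edge between
  the k-th lift of white w and the l-th lift of black torus_target w i, lifting the type-i edge at w.\<close>
definition blowup_edges :: "nat \<Rightarrow> nat \<Rightarrow> nat \<Rightarrow> ((int^'d) \<times> nat \<times> nat \<times> nat) set" where
  "blowup_edges D n N = {(w, i, k, l). w \<in> torus_reps n \<and> i < D \<and> k < N \<and> l < N}"

definition perfect_matchings ::
  "nat \<Rightarrow> (nat \<Rightarrow> real^'d) \<Rightarrow> real^'d \<Rightarrow> nat \<Rightarrow> nat \<Rightarrow> ((int^'d) \<times> nat \<times> nat \<times> nat) set set" where
  "perfect_matchings D e v0 n N =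
     {M. M \<subseteq> blowup_edges D n N \<and>
        (\<forall>w\<in>torus_reps n. \<forall>k<N. \<exists>!x. x \<in> M \<and> fst x = w \<and> fst (snd (snd x)) = k) \<and>
        (\<forall>b\<in>torus_reps n. \<forall>l<N. \<exists>!x. x \<in> M \<and>
            torus_target n e v0 (fst x) (fst (snd x)) = b \<and> snd (snd (snd x)) = l)}"

definition Z_part ::
  "nat \<Rightarrow> (nat \<Rightarrow> real^'d) \<Rightarrow> real^'d \<Rightarrow> (nat \<Rightarrow> real) \<Rightarrow> nat \<Rightarrow> nat \<Rightarrow> real" where
  "Z_part D e v0 wt n N =
     (\<Sum>M\<in>perfect_matchings D e v0 n N. \<Prod>x\<in>M. wt (fst (snd x)))"

end

theory Submission
  imports Defs "HOL-Real_Asymp.Real_Asymp"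
begin

(* A perfect matching of the N-fold blow-up amounts to choosing, for every lift (w, k) of a white
   vertex, the type t w k of its matching edge and, for every black vertex b, a bijection from the
   white lifts sent to b onto the N lifts of b.  So Z is the sum over t of the product of the
   weights times the number of such families of bijections, which is at most (N!)^(n^d):
   Z <= (N!)^(n^d) W^(N n^d) with W = w_1 + ... + w_D.  If every white vertex uses each type i
   exactly a_i times then, every edge type being a permutation of the torus, each black vertex
   receives exactly N lifts and the bound (N!)^(n^d) is attained; by pigeonhole some composition a
   carries at least W^N / (N+1)^D of W^N, whence Z >= (N!)^(n^d) (W^N / (N+1)^D)^(n^d).  So the
   limit in N is ln W already for every n. *)

section \<open>Counting bijections\<close>

lemma bij_betw_iff_ex1:
  assumes "f ` A \<subseteq> B"
  shows "bij_betw f A B \<longleftrightarrow> (\<forall>y\<in>B. \<exists>!x\<in>A. f x = y)"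
  using assms unfolding bij_betw_def inj_on_def by blast

lemma bij_betw_pair_iff_fibers:
  assumes "p ` X \<subseteq> B"
  shows "bij_betw (\<lambda>x. (p x, l x)) X (B \<times> Y) \<longleftrightarrow> (\<forall>b\<in>B. bij_betw l {x\<in>X. p x = b} Y)"
    (is "?pair \<longleftrightarrow> ?fibers")
proof -
  have "?pair \<longleftrightarrow> l ` X \<subseteq> Y \<and> (\<forall>b\<in>B. \<forall>y\<in>Y. \<exists>!x\<in>X. (p x, l x) = (b, y))"
  proof (cases "l ` X \<subseteq> Y")
    case True
    then have "(\<lambda>x. (p x, l x)) ` X \<subseteq> B \<times> Y" using assms by auto
    then show ?thesis using True by (simp add: bij_betw_iff_ex1)
  qed (auto simp: bij_betw_def)
  also have "\<dots> \<longleftrightarrow> ?fibers"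
  proof (cases "l ` X \<subseteq> Y")
    case True
    then have "l ` {x\<in>X. p x = b} \<subseteq> Y" for b by auto
    then show ?thesis using True by (simp add: bij_betw_iff_ex1 conj_assoc)
  next
    case False
    then obtain x where "x \<in> X" "l x \<notin> Y" by auto
    then have "\<not> bij_betw l {x'\<in>X. p x' = p x} Y" by (auto simp: bij_betw_def)
    then show ?thesis using False assms \<open>x \<in> X\<close> by auto
  qed
  finally show ?thesis .
qed

lemma card_PiE_bij_betw:
  assumes "finite F" "finite Y" "card F = card Y"
  shows "card {g \<in> F \<rightarrow>\<^sub>E Y. bij_betw g F Y} = fact (card F)"
proof -
  have "{g \<in> F \<rightarrow>\<^sub>E Y. bij_betw g F Y} = {g \<in> F \<rightarrow>\<^sub>E Y. inj_on g F}"
  proof (intro Collect_cong conj_cong refl iffI)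
    fix g assume "g \<in> F \<rightarrow>\<^sub>E Y" "inj_on g F"
    then have "g ` F \<subseteq> Y" "card (g ` F) = card Y" using assms by (auto simp: card_image)
    then have "g ` F = Y" using assms by (intro card_subset_eq) auto
    then show "bij_betw g F Y" using \<open>inj_on g F\<close> by (simp add: bij_betw_def)
  qed (simp add: bij_betw_def)
  also have "card \<dots> = card Y ^ (card F - card F) * prod ((-) (card Y)) {0..<card F}"
    using assms by (intro card_inj_on_subset_funcset) auto
  also have "\<dots> = fact (card F)" using assms by (simp add: fact_prod_rev)
  finally show ?thesis .
qed

lemma bij_betw_restrict_fibers:
  assumes p: "\<And>x. x \<in> X \<Longrightarrow> p x \<in> B"
  defines "F b \<equiv> {x\<in>X. p x = b}"
  shows "bij_betw (\<lambda>l. \<lambda>b\<in>B. restrict l (F b))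
           {l \<in> X \<rightarrow>\<^sub>E Y. \<forall>b\<in>B. bij_betw l (F b) Y} (\<Pi>\<^sub>E b\<in>B. {g \<in> F b \<rightarrow>\<^sub>E Y. bij_betw g (F b) Y})"
    (is "bij_betw _ ?S (PiE B ?G)")
proof (rule bij_betw_byWitness[where f' = "\<lambda>G. \<lambda>x\<in>X. G (p x) x"])
  have bij_restrict: "bij_betw (restrict l (F b)) (F b) Y \<longleftrightarrow> bij_betw l (F b) Y" for l b
    by (rule bij_betw_cong) simp
  show "\<forall>l\<in>?S. (\<lambda>x\<in>X. (\<lambda>b\<in>B. restrict l (F b)) (p x) x) = l"
  proof
    fix l assume "l \<in> ?S"
    then show "(\<lambda>x\<in>X. (\<lambda>b\<in>B. restrict l (F b)) (p x) x) = l"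
      by (intro extensionalityI[where A = X]) (auto simp: F_def p PiE_iff)
  qed
  show "\<forall>G\<in>PiE B ?G. (\<lambda>b\<in>B. restrict (\<lambda>x\<in>X. G (p x) x) (F b)) = G"
  proof
    fix G assume G: "G \<in> PiE B ?G"
    show "(\<lambda>b\<in>B. restrict (\<lambda>x\<in>X. G (p x) x) (F b)) = G"
    proof (rule extensionalityI[where A = B])
      fix b assume "b \<in> B"
      then have "G b \<in> extensional (F b)" using G by (auto simp: PiE_iff)
      then show "(\<lambda>b\<in>B. restrict (\<lambda>x\<in>X. G (p x) x) (F b)) b = G b"
        using \<open>b \<in> B\<close> by (intro extensionalityI[where A = "F b"]) (auto simp: F_def)
    qed (use G in \<open>auto simp: PiE_iff\<close>)
  qed
  show "(\<lambda>l. \<lambda>b\<in>B. restrict l (F b)) ` ?S \<subseteq> PiE B ?G"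
  proof clarify
    fix l assume l: "l \<in> X \<rightarrow>\<^sub>E Y" "\<forall>b\<in>B. bij_betw l (F b) Y"
    have "restrict l (F b) \<in> ?G b" if "b \<in> B" for b
    proof -
      have "F b \<subseteq> X" by (auto simp: F_def)
      then have "restrict l (F b) \<in> F b \<rightarrow>\<^sub>E Y" using l(1) by auto
      then show ?thesis using l(2) that bij_restrict by simp
    qed
    then show "(\<lambda>b\<in>B. restrict l (F b)) \<in> PiE B ?G" by simp
  qed
  show "(\<lambda>G. \<lambda>x\<in>X. G (p x) x) ` PiE B ?G \<subseteq> ?S"
  proof (rule image_subsetI)
    fix G assume G: "G \<in> PiE B ?G"
    have "G (p x) x \<in> Y" if "x \<in> X" for x
      using G p[OF that] that by (auto simp: F_def PiE_iff)
    moreover have "bij_betw (\<lambda>x\<in>X. G (p x) x) (F b) Y" if "b \<in> B" for b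
    proof -
      have "bij_betw (G b) (F b) Y" using G that by (auto simp: PiE_iff)
      moreover have "(\<lambda>x\<in>X. G (p x) x) x = G b x" if "x \<in> F b" for x
        using that by (simp add: F_def)
      ultimately show ?thesis using bij_betw_cong by blast
    qed
    ultimately show "(\<lambda>x\<in>X. G (p x) x) \<in> ?S" by auto
  qed
qed

lemma card_PiE_bij_betw_fibers:
  assumes "finite B" "\<And>x. x \<in> X \<Longrightarrow> p x \<in> B"
  shows "card {l \<in> X \<rightarrow>\<^sub>E Y. \<forall>b\<in>B. bij_betw l {x\<in>X. p x = b} Y}
       = (\<Prod>b\<in>B. card {g \<in> {x\<in>X. p x = b} \<rightarrow>\<^sub>E Y. bij_betw g {x\<in>X. p x = b} Y})"
  using bij_betw_same_card[OF bij_betw_restrict_fibers[OF assms(2)]] assms(1)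
  by (simp add: card_PiE)

section \<open>Perfect matchings of blown-up edge-typed bipartite graphs\<close>

(* (w, i, k, l) is the lift of the type-i edge at w joining the k-th lift of w to the l-th lift
   of the black vertex tgt w i. *)
definition lifted_edges :: "'w set \<Rightarrow> nat \<Rightarrow> nat \<Rightarrow> ('w \<times> nat \<times> nat \<times> nat) set" where
  "lifted_edges R D N = {(w, i, k, l). w \<in> R \<and> i < D \<and> k < N \<and> l < N}"

definition blowup_matchings ::
  "'w set \<Rightarrow> ('w \<Rightarrow> nat \<Rightarrow> 'w) \<Rightarrow> nat \<Rightarrow> nat \<Rightarrow> ('w \<times> nat \<times> nat \<times> nat) set set" where
  "blowup_matchings R tgt D N = {M. M \<subseteq> lifted_edges R D N \<and>
        (\<forall>w\<in>R. \<forall>k<N. \<exists>!x. x \<in> M \<and> fst x = w \<and> fst (snd (snd x)) = k) \<and>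
        (\<forall>b\<in>R. \<forall>l<N. \<exists>!x. x \<in> M \<and> tgt (fst x) (fst (snd x)) = b \<and> snd (snd (snd x)) = l)}"

definition blowup_partition ::
  "'w set \<Rightarrow> ('w \<Rightarrow> nat \<Rightarrow> 'w) \<Rightarrow> nat \<Rightarrow> nat \<Rightarrow> (nat \<Rightarrow> real) \<Rightarrow> real" where
  "blowup_partition R tgt D N wt = (\<Sum>M\<in>blowup_matchings R tgt D N. \<Prod>x\<in>M. wt (fst (snd x)))"

definition white_end :: "'w \<times> nat \<times> nat \<times> nat \<Rightarrow> 'w \<times> nat" where
  "white_end x = (fst x, fst (snd (snd x)))"

definition black_end :: "('w \<Rightarrow> nat \<Rightarrow> 'w) \<Rightarrow> 'w \<times> nat \<times> nat \<times> nat \<Rightarrow> 'w \<times> nat" where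
  "black_end tgt x = (tgt (fst x) (fst (snd x)), snd (snd (snd x)))"

(* A matching is encoded by the type t w k of the edge at the k-th lift of w and the lift index
   l (w, k) of its black end; l has to biject every black fibre onto the N lifts. *)
definition type_maps :: "'w set \<Rightarrow> nat \<Rightarrow> nat \<Rightarrow> ('w \<Rightarrow> nat \<Rightarrow> nat) set" where
  "type_maps R D N = R \<rightarrow>\<^sub>E ({..<N} \<rightarrow>\<^sub>E {..<D})"

definition black_fiber ::
  "'w set \<Rightarrow> ('w \<Rightarrow> nat \<Rightarrow> 'w) \<Rightarrow> nat \<Rightarrow> ('w \<Rightarrow> nat \<Rightarrow> nat) \<Rightarrow> 'w \<Rightarrow> ('w \<times> nat) set" where
  "black_fiber R tgt N t b = {x \<in> R \<times> {..<N}. tgt (fst x) (t (fst x) (snd x)) = b}"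

definition black_labellings ::
  "'w set \<Rightarrow> ('w \<Rightarrow> nat \<Rightarrow> 'w) \<Rightarrow> nat \<Rightarrow> ('w \<Rightarrow> nat \<Rightarrow> nat) \<Rightarrow> ('w \<times> nat \<Rightarrow> nat) set" where
  "black_labellings R tgt N t =
     {l \<in> (R \<times> {..<N}) \<rightarrow>\<^sub>E {..<N}. \<forall>b\<in>R. bij_betw l (black_fiber R tgt N t b) {..<N}}"

definition lift_edge ::
  "('w \<Rightarrow> nat \<Rightarrow> nat) \<Rightarrow> ('w \<times> nat \<Rightarrow> nat) \<Rightarrow> 'w \<times> nat \<Rightarrow> 'w \<times> nat \<times> nat \<times> nat" where
  "lift_edge t l x = (fst x, t (fst x) (snd x), snd x, l x)"

definition lift_matching ::
  "'w set \<Rightarrow> nat \<Rightarrow> ('w \<Rightarrow> nat \<Rightarrow> nat) \<times> ('w \<times> nat \<Rightarrow> nat) \<Rightarrow> ('w \<times> nat \<times> nat \<times> nat) set" where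
  "lift_matching R N = (\<lambda>(t, l). lift_edge t l ` (R \<times> {..<N}))"

lemma mem_lifted_edges [simp]:
  "(w, i, k, l) \<in> lifted_edges R D N \<longleftrightarrow> w \<in> R \<and> i < D \<and> k < N \<and> l < N"
  by (simp add: lifted_edges_def)

lemma white_end_lift_edge [simp]: "white_end (lift_edge t l x) = x"
  by (simp add: white_end_def lift_edge_def)

lemma black_end_lift_edge [simp]:
  "black_end tgt (lift_edge t l x) = (tgt (fst x) (t (fst x) (snd x)), l x)"
  by (simp add: black_end_def lift_edge_def)

lemma inj_lift_edge: "inj (lift_edge t l)"
  by (metis injI white_end_lift_edge)

lemma type_maps_range: "t \<in> type_maps R D N \<Longrightarrow> w \<in> R \<Longrightarrow> k < N \<Longrightarrow> t w k < D"
  unfolding type_maps_def by (auto simp: PiE_iff)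

lemma type_maps_eqI:
  assumes "t \<in> type_maps R D N" "t' \<in> type_maps R D N" "\<And>w k. w \<in> R \<Longrightarrow> k < N \<Longrightarrow> t w k = t' w k"
  shows "t = t'"
  using assms unfolding type_maps_def by (intro PiE_ext[of t R] PiE_ext[of "t _" "{..<N}"]) auto

(* White and black vertices are both indexed by R. *)
locale typed_bipartite =
  fixes R :: "'w set" and tgt :: "'w \<Rightarrow> nat \<Rightarrow> 'w" and D :: nat
  assumes finite_R: "finite R"
    and bij_tgt: "i < D \<Longrightarrow> bij_betw (\<lambda>w. tgt w i) R R"
begin

lemma tgt_in_R: "w \<in> R \<Longrightarrow> i < D \<Longrightarrow> tgt w i \<in> R"
  using bij_tgt bij_betwE by blast

lemma blowup_matchings_iff:
  "M \<in> blowup_matchings R tgt D N \<longleftrightarrow> M \<subseteq> lifted_edges R D N \<and>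
     bij_betw white_end M (R \<times> {..<N}) \<and> bij_betw (black_end tgt) M (R \<times> {..<N})"
proof (cases "M \<subseteq> lifted_edges R D N")
  case True
  have "white_end x \<in> R \<times> {..<N} \<and> black_end tgt x \<in> R \<times> {..<N}" if "x \<in> M" for x
    using True that by (cases x) (auto simp: white_end_def black_end_def tgt_in_R)
  then have "white_end ` M \<subseteq> R \<times> {..<N}" "black_end tgt ` M \<subseteq> R \<times> {..<N}"
    by blast+
  then show ?thesis
    by (simp add: blowup_matchings_def bij_betw_iff_ex1 white_end_def black_end_def True Ball_def imp_conjL)
qed (simp add: blowup_matchings_def)

lemma lift_matching_in_blowup_matchings_iff:
  assumes t: "t \<in> type_maps R D N" and l: "l \<in> (R \<times> {..<N}) \<rightarrow>\<^sub>E {..<N}"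
  shows "lift_matching R N (t, l) \<in> blowup_matchings R tgt D N \<longleftrightarrow> l \<in> black_labellings R tgt N t"
proof -
  let ?A = "R \<times> {..<N}" and ?M = "lift_matching R N (t, l)"
  have lift: "bij_betw (lift_edge t l) ?A ?M"
    unfolding lift_matching_def bij_betw_def by (auto intro: inj_on_subset[OF inj_lift_edge])
  have "?M \<subseteq> lifted_edges R D N"
    using t l by (auto simp: lift_matching_def lift_edge_def type_maps_range)
  moreover have "bij_betw white_end ?M ?A"
    using bij_betw_comp_iff[OF lift, of white_end] by (simp add: comp_def bij_betw_id[unfolded id_def])
  moreover have "bij_betw (black_end tgt) ?M ?A \<longleftrightarrow>
      bij_betw (\<lambda>x. (tgt (fst x) (t (fst x) (snd x)), l x)) ?A ?A"
    using bij_betw_comp_iff[OF lift, of "black_end tgt"] by (simp add: comp_def)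
  moreover have "(\<lambda>x. tgt (fst x) (t (fst x) (snd x))) ` ?A \<subseteq> R"
    using t by (auto simp: tgt_in_R type_maps_range)
  ultimately show ?thesis
    using l by (simp add: blowup_matchings_iff bij_betw_pair_iff_fibers black_labellings_def black_fiber_def)
qed

lemma inj_on_lift_matching:
  "inj_on (lift_matching R N) (Sigma (type_maps R D N) (black_labellings R tgt N))"
proof (rule inj_onI, clarify)
  fix t l t' l'
  assume t: "t \<in> type_maps R D N" and l: "l \<in> black_labellings R tgt N t"
    and t': "t' \<in> type_maps R D N" and l': "l' \<in> black_labellings R tgt N t'"
    and eq: "lift_matching R N (t, l) = lift_matching R N (t', l')"
  have same: "lift_edge t l x = lift_edge t' l' x" if x: "x \<in> R \<times> {..<N}" for x
  proof -
    have "lift_edge t l x \<in> lift_edge t' l' ` (R \<times> {..<N})"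
      using imageI[OF x, of "lift_edge t l"] eq by (simp add: lift_matching_def)
    then obtain y where "lift_edge t l x = lift_edge t' l' y" by blast
    moreover from this have "x = y" by (metis white_end_lift_edge)
    ultimately show ?thesis by simp
  qed
  have agree: "t w k = t' w k" "l (w, k) = l' (w, k)" if "w \<in> R" "k < N" for w k
    using same[of "(w, k)"] that by (simp_all add: lift_edge_def)
  have l_fun: "l \<in> R \<times> {..<N} \<rightarrow>\<^sub>E {..<N}" "l' \<in> R \<times> {..<N} \<rightarrow>\<^sub>E {..<N}"
    using l l' by (simp_all add: black_labellings_def)
  show "t = t' \<and> l = l'"
  proof
    show "t = t'" using agree(1) by (rule type_maps_eqI[OF t t'])
    show "l = l'" using agree(2) by (intro PiE_ext[OF l_fun]) auto
  qed
qed

lemma blowup_matching_is_lift_matching: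
  assumes M: "M \<in> blowup_matchings R tgt D N"
  shows "M \<in> lift_matching R N ` Sigma (type_maps R D N) (black_labellings R tgt N)"
proof -
  let ?A = "R \<times> {..<N}"
  have edges: "M \<subseteq> lifted_edges R D N" and white: "bij_betw white_end M ?A"
    using M by (simp_all add: blowup_matchings_iff)
  define g where "g = the_inv_into M white_end"
  have g: "bij_betw g ?A M" and white_g: "\<And>x. x \<in> ?A \<Longrightarrow> white_end (g x) = x"
    unfolding g_def using white by (simp_all add: bij_betw_the_inv_into f_the_inv_into_f_bij_betw)
  define t where "t = (\<lambda>w\<in>R. \<lambda>k\<in>{..<N}. fst (snd (g (w, k))))"
  define l where "l = (\<lambda>x\<in>?A. snd (snd (snd (g x))))"
  have g_lift: "g x = lift_edge t l x" if x: "x \<in> ?A" for x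
    using white_g[OF x] x by (cases x; cases "g x") (auto simp: white_end_def lift_edge_def t_def l_def)
  have g_range: "fst (snd (g x)) < D" "snd (snd (snd (g x))) < N" if "x \<in> ?A" for x
    using bij_betwE[OF g] edges that by (cases "g x"; fastforce)+
  have "M = g ` ?A" using bij_betw_imp_surj_on[OF g] by simp
  also have "\<dots> = lift_matching R N (t, l)"
    unfolding lift_matching_def using g_lift by (simp cong: image_cong)
  finally have M_eq: "M = lift_matching R N (t, l)" .
  have t_type: "t \<in> type_maps R D N"
    unfolding type_maps_def t_def by (simp add: restrict_PiE_iff g_range)
  have l_range: "l \<in> ?A \<rightarrow>\<^sub>E {..<N}"
    unfolding l_def by (simp add: restrict_PiE_iff g_range)
  have "l \<in> black_labellings R tgt N t"
    using lift_matching_in_blowup_matchings_iff[OF t_type l_range] M M_eq by simp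
  then show ?thesis using M_eq t_type by blast
qed

lemma bij_betw_lift_matching:
  "bij_betw (lift_matching R N) (Sigma (type_maps R D N) (black_labellings R tgt N))
     (blowup_matchings R tgt D N)"
proof (rule bij_betw_imageI[OF inj_on_lift_matching])
  show "lift_matching R N ` Sigma (type_maps R D N) (black_labellings R tgt N) = blowup_matchings R tgt D N"
    using lift_matching_in_blowup_matchings_iff blowup_matching_is_lift_matching
    by (auto simp: black_labellings_def)
qed

end

section \<open>Bounds on the partition function\<close>

lemma finite_type_maps: "finite R \<Longrightarrow> finite (type_maps R D N)"
  unfolding type_maps_def by (intro finite_PiE) auto

lemma finite_black_labellings: "finite R \<Longrightarrow> finite (black_labellings R tgt N t)"
  by (rule finite_subset[of _ "(R \<times> {..<N}) \<rightarrow>\<^sub>E {..<N}"])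
    (auto simp: black_labellings_def intro!: finite_PiE)

lemma sum_type_maps_prod:
  fixes wt :: "nat \<Rightarrow> real"
  assumes "finite R"
  shows "(\<Sum>t\<in>type_maps R D N. \<Prod>w\<in>R. \<Prod>k<N. wt (t w k)) = ((\<Sum>i<D. wt i) ^ N) ^ card R"
proof -
  have "(\<Sum>t\<in>type_maps R D N. \<Prod>w\<in>R. \<Prod>k<N. wt (t w k))
      = (\<Prod>w\<in>R. \<Sum>s\<in>{..<N} \<rightarrow>\<^sub>E {..<D}. \<Prod>k<N. wt (s k))"
    unfolding type_maps_def using assms by (intro prod_sum_PiE[symmetric]) (auto intro: finite_PiE)
  also have "\<dots> = (\<Prod>w\<in>R. \<Prod>k<N. \<Sum>i<D. wt i)"
    by (intro prod.cong refl prod_sum_PiE[of "{..<N}" "\<lambda>_. {..<D}" "\<lambda>k i. wt i", symmetric]) auto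
  finally show ?thesis by simp
qed

context typed_bipartite
begin

lemma blowup_partition_eq_sum_type_maps:
  "blowup_partition R tgt D N wt =
     (\<Sum>t\<in>type_maps R D N. (\<Prod>w\<in>R. \<Prod>k<N. wt (t w k)) * card (black_labellings R tgt N t))"
proof -
  have weight: "(\<Prod>x\<in>lift_matching R N (t, l). wt (fst (snd x))) = (\<Prod>w\<in>R. \<Prod>k<N. wt (t w k))" for t l
  proof -
    have "(\<Prod>x\<in>lift_matching R N (t, l). wt (fst (snd x))) = (\<Prod>x\<in>R \<times> {..<N}. wt (t (fst x) (snd x)))"
      unfolding lift_matching_def case_prod_conv prod.reindex[OF inj_on_subset[OF inj_lift_edge subset_UNIV]]
      by (simp add: lift_edge_def)
    also have "\<dots> = (\<Prod>w\<in>R. \<Prod>k<N. wt (t w k))"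
      by (simp add: prod.cartesian_product case_prod_beta)
    finally show ?thesis .
  qed
  have "blowup_partition R tgt D N wt =
      (\<Sum>p\<in>Sigma (type_maps R D N) (black_labellings R tgt N). \<Prod>x\<in>lift_matching R N p. wt (fst (snd x)))"
    unfolding blowup_partition_def by (rule sum.reindex_bij_betw[OF bij_betw_lift_matching, symmetric])
  also have "\<dots> = (\<Sum>(t, l)\<in>Sigma (type_maps R D N) (black_labellings R tgt N). \<Prod>w\<in>R. \<Prod>k<N. wt (t w k))"
    by (rule sum.cong[OF refl]) (clarsimp simp: weight)
  also have "\<dots> = (\<Sum>t\<in>type_maps R D N. \<Sum>l\<in>black_labellings R tgt N t. \<Prod>w\<in>R. \<Prod>k<N. wt (t w k))"
    using finite_R by (intro sum.Sigma[symmetric]) (auto simp: finite_type_maps finite_black_labellings)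
  also have "\<dots> = (\<Sum>t\<in>type_maps R D N. (\<Prod>w\<in>R. \<Prod>k<N. wt (t w k)) * card (black_labellings R tgt N t))"
    by (simp add: mult.commute)
  finally show ?thesis .
qed

lemma finite_black_fiber: "finite (black_fiber R tgt N t b)"
  unfolding black_fiber_def using finite_R by simp

lemma card_black_labellings:
  assumes t: "t \<in> type_maps R D N"
  shows "card (black_labellings R tgt N t) =
    (\<Prod>b\<in>R. card {g \<in> black_fiber R tgt N t b \<rightarrow>\<^sub>E {..<N}. bij_betw g (black_fiber R tgt N t b) {..<N}})"
  unfolding black_labellings_def black_fiber_def
  using finite_R t by (intro card_PiE_bij_betw_fibers) (auto simp: tgt_in_R type_maps_range)

lemma card_black_labellings_le:
  assumes t: "t \<in> type_maps R D N"
  shows "card (black_labellings R tgt N t) \<le> fact N ^ card R"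
proof -
  have "card {g \<in> black_fiber R tgt N t b \<rightarrow>\<^sub>E {..<N}. bij_betw g (black_fiber R tgt N t b) {..<N}} \<le> fact N"
    for b
  proof (cases "card (black_fiber R tgt N t b) = N")
    case True
    then show ?thesis using card_PiE_bij_betw[OF finite_black_fiber, of "{..<N}"] by simp
  next
    case False
    then have "{g \<in> black_fiber R tgt N t b \<rightarrow>\<^sub>E {..<N}. bij_betw g (black_fiber R tgt N t b) {..<N}} = {}"
      using bij_betw_same_card by fastforce
    then show ?thesis by (simp only: card.empty)
  qed
  then show ?thesis
    unfolding card_black_labellings[OF t] by (intro prod_le_power) (auto simp: Suc_leI)
qed

lemma card_black_labellings_eq:
  assumes t: "t \<in> type_maps R D N" and fibers: "\<And>b. b \<in> R \<Longrightarrow> card (black_fiber R tgt N t b) = N"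
  shows "card (black_labellings R tgt N t) = fact N ^ card R"
  unfolding card_black_labellings[OF t]
  using card_PiE_bij_betw[OF finite_black_fiber, of "{..<N}"] fibers by simp

lemma blowup_partition_le:
  assumes wt: "\<And>i. i < D \<Longrightarrow> 0 \<le> wt i"
  shows "blowup_partition R tgt D N wt \<le> fact N ^ card R * ((\<Sum>i<D. wt i) ^ N) ^ card R"
proof -
  have "blowup_partition R tgt D N wt
      \<le> (\<Sum>t\<in>type_maps R D N. (\<Prod>w\<in>R. \<Prod>k<N. wt (t w k)) * fact N ^ card R)"
    unfolding blowup_partition_eq_sum_type_maps
  proof (rule sum_mono)
    fix t assume t: "t \<in> type_maps R D N"
    have "real (card (black_labellings R tgt N t)) \<le> fact N ^ card R"
      using card_black_labellings_le[OF t] by (metis of_nat_fact of_nat_le_iff of_nat_power)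
    moreover have "0 \<le> (\<Prod>w\<in>R. \<Prod>k<N. wt (t w k))"
      using t by (intro prod_nonneg) (simp add: wt type_maps_range)
    ultimately show "(\<Prod>w\<in>R. \<Prod>k<N. wt (t w k)) * card (black_labellings R tgt N t)
        \<le> (\<Prod>w\<in>R. \<Prod>k<N. wt (t w k)) * fact N ^ card R"
      by (rule mult_left_mono)
  qed
  also have "\<dots> = fact N ^ card R * ((\<Sum>i<D. wt i) ^ N) ^ card R"
    using finite_R by (simp add: sum_distrib_left[symmetric] sum_type_maps_prod mult.commute)
  finally show ?thesis .
qed

end

definition type_count :: "nat \<Rightarrow> nat \<Rightarrow> (nat \<Rightarrow> nat) \<Rightarrow> nat \<Rightarrow> nat" where
  "type_count D N s = (\<lambda>i\<in>{..<D}. card {k\<in>{..<N}. s k = i})"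

definition words_of_type :: "nat \<Rightarrow> nat \<Rightarrow> (nat \<Rightarrow> nat) \<Rightarrow> (nat \<Rightarrow> nat) set" where
  "words_of_type D N a = {s \<in> {..<N} \<rightarrow>\<^sub>E {..<D}. type_count D N s = a}"

lemma finite_words_of_type: "finite (words_of_type D N a)"
  by (rule finite_subset[of _ "{..<N} \<rightarrow>\<^sub>E {..<D}"]) (auto simp: words_of_type_def intro!: finite_PiE)

lemma sum_card_preimages_eq:
  fixes s :: "nat \<Rightarrow> nat"
  assumes "s \<in> {..<N} \<rightarrow>\<^sub>E {..<D}"
  shows "(\<Sum>i<D. card {k\<in>{..<N}. s k = i}) = N"
proof -
  have "s ` {..<N} \<subseteq> {..<D}" using assms by auto
  then have "(\<Sum>i<D. \<Sum>k\<in>{k\<in>{..<N}. s k = i}. 1::nat) = (\<Sum>k<N. 1::nat)"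
    by (rule sum.group[rotated 2]) simp_all
  then show ?thesis by simp
qed

(* Pigeonhole over the at most (N + 1)^D possible type counts. *)
lemma exists_heavy_words_of_type:
  fixes wt :: "nat \<Rightarrow> real"
  shows "\<exists>a. (\<Sum>i<D. wt i) ^ N / real ((N + 1) ^ D) \<le> (\<Sum>s\<in>words_of_type D N a. \<Prod>k<N. wt (s k))"
proof (rule ccontr)
  let ?W = "(\<Sum>i<D. wt i) ^ N" and ?A = "{..<D} \<rightarrow>\<^sub>E {..N}"
  assume "\<nexists>a. ?W / real ((N + 1) ^ D) \<le> (\<Sum>s\<in>words_of_type D N a. \<Prod>k<N. wt (s k))"
  then have light: "(\<Sum>s\<in>words_of_type D N a. \<Prod>k<N. wt (s k)) < ?W / real ((N + 1) ^ D)" for a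
    by (simp add: not_le)
  have card_A: "card ?A = (N + 1) ^ D" by (simp add: card_PiE)
  have "card {k\<in>{..<N}. s k = i} \<le> N" for s i
    using card_mono[of "{..<N}" "{k\<in>{..<N}. s k = i}"] by auto
  then have counts: "type_count D N ` ({..<N} \<rightarrow>\<^sub>E {..<D}) \<subseteq> ?A"
    by (auto simp: type_count_def)
  have "?W = (\<Sum>s\<in>{..<N} \<rightarrow>\<^sub>E {..<D}. \<Prod>k<N. wt (s k))"
    using prod_sum_PiE[of "{..<N}" "\<lambda>_. {..<D}" "\<lambda>k i. wt i"] by simp
  also have "\<dots> = (\<Sum>a\<in>?A. \<Sum>s\<in>words_of_type D N a. \<Prod>k<N. wt (s k))"
    unfolding words_of_type_def using counts by (intro sum.group[symmetric]) (auto intro: finite_PiE)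
  also have "\<dots> < (\<Sum>a\<in>?A. ?W / real ((N + 1) ^ D))"
    using card_A by (intro sum_strict_mono light) (auto intro: finite_PiE)
  also have "\<dots> = ?W" using card_A by simp
  finally show False by simp
qed

context typed_bipartite
begin

lemma card_black_fiber_words_of_type:
  assumes t: "t \<in> R \<rightarrow>\<^sub>E words_of_type D N a" and b: "b \<in> R"
  shows "card (black_fiber R tgt N t b) = N"
proof -
  define src where "src i = the_inv_into R (\<lambda>w. tgt w i) b" for i
  have src: "src i \<in> R" "tgt (src i) i = b" if "i < D" for i
    using bij_tgt[OF that] b unfolding src_def
    by (auto intro: the_inv_into_into f_the_inv_into_f_bij_betw simp: bij_betw_def)
  have src_unique: "w = src i" if "w \<in> R" "i < D" "tgt w i = b" for w i
    using bij_tgt[OF that(2)] that unfolding src_def bij_betw_def by (auto intro: the_inv_into_f_eq[symmetric])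
  have t_type: "t w \<in> words_of_type D N a" if "w \<in> R" for w
    using t that by auto
  \<comment> \<open>for every type i only the white vertex src i contributes, with a i lifts\<close>
  let ?S = "SIGMA i:{..<D}. {k\<in>{..<N}. t (src i) k = i}"
  have fiber_eq: "black_fiber R tgt N t b = (\<lambda>(i, k). (src i, k)) ` ?S"
  proof (rule set_eqI, rule iffI)
    fix x assume "x \<in> black_fiber R tgt N t b"
    then obtain w k where x: "x = (w, k)" "w \<in> R" "k < N" "tgt w (t w k) = b"
      by (auto simp: black_fiber_def)
    have i: "t w k < D" using t_type[OF x(2)] x(3) by (auto simp: words_of_type_def)
    have src_w: "src (t w k) = w" using src_unique[OF x(2) i x(4)] by simp
    show "x \<in> (\<lambda>(i, k). (src i, k)) ` ?S"
      by (intro image_eqI[of _ _ "(t w k, k)"]) (simp_all add: x(1,3) i src_w)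
  next
    fix x assume "x \<in> (\<lambda>(i, k). (src i, k)) ` ?S"
    then obtain i k where "i < D" "k < N" "t (src i) k = i" "x = (src i, k)" by auto
    then show "x \<in> black_fiber R tgt N t b" by (simp add: black_fiber_def src)
  qed
  have "inj_on (\<lambda>(i, k). (src i, k)) ?S"
    by (rule inj_on_inverseI[where g = "\<lambda>(w, k). (t w k, k)"]) auto
  then have "card (black_fiber R tgt N t b) = card ?S"
    unfolding fiber_eq by (rule card_image)
  also have "\<dots> = (\<Sum>i<D. card {k\<in>{..<N}. t (src i) k = i})"
    by (simp add: card_SigmaI)
  also have "\<dots> = (\<Sum>i<D. card {k\<in>{..<N}. t b k = i})"
  proof (rule sum.cong[OF refl])
    fix i assume "i \<in> {..<D}"
    then have "t (src i) \<in> words_of_type D N a" "t b \<in> words_of_type D N a"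
      using t_type src(1) b by auto
    then have "type_count D N (t (src i)) i = type_count D N (t b) i"
      by (simp add: words_of_type_def)
    then show "card {k\<in>{..<N}. t (src i) k = i} = card {k\<in>{..<N}. t b k = i}"
      using \<open>i \<in> {..<D}\<close> by (simp add: type_count_def)
  qed
  also have "\<dots> = N"
    using t_type[OF b] by (intro sum_card_preimages_eq) (simp add: words_of_type_def)
  finally show ?thesis .
qed

lemma blowup_partition_ge:
  fixes wt :: "nat \<Rightarrow> real"
  assumes wt: "\<And>i. i < D \<Longrightarrow> 0 \<le> wt i"
  shows "fact N ^ card R * ((\<Sum>i<D. wt i) ^ N / real ((N + 1) ^ D)) ^ card R \<le> blowup_partition R tgt D N wt"
proof -
  obtain a where heavy: "(\<Sum>i<D. wt i) ^ N / real ((N + 1) ^ D) \<le> (\<Sum>s\<in>words_of_type D N a. \<Prod>k<N. wt (s k))"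
    using exists_heavy_words_of_type by blast
  let ?T = "R \<rightarrow>\<^sub>E words_of_type D N a"
  have T_sub: "?T \<subseteq> type_maps R D N"
    unfolding type_maps_def words_of_type_def by auto
  have nonneg: "0 \<le> (\<Prod>w\<in>R. \<Prod>k<N. wt (t w k))" if "t \<in> type_maps R D N" for t
    using that by (intro prod_nonneg) (simp add: wt type_maps_range)
  have "fact N ^ card R * ((\<Sum>i<D. wt i) ^ N / real ((N + 1) ^ D)) ^ card R
      \<le> fact N ^ card R * (\<Sum>s\<in>words_of_type D N a. \<Prod>k<N. wt (s k)) ^ card R"
    using heavy wt by (intro mult_left_mono power_mono divide_nonneg_nonneg zero_le_power sum_nonneg) auto
  also have "\<dots> = fact N ^ card R * (\<Sum>t\<in>?T. \<Prod>w\<in>R. \<Prod>k<N. wt (t w k))"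
    using prod_sum_PiE[of R "\<lambda>_. words_of_type D N a" "\<lambda>_ s. \<Prod>k<N. wt (s k)"]
      finite_R finite_words_of_type by simp
  also have "\<dots> = (\<Sum>t\<in>?T. (\<Prod>w\<in>R. \<Prod>k<N. wt (t w k)) * card (black_labellings R tgt N t))"
    using T_sub card_black_fiber_words_of_type
    by (simp add: sum_distrib_left mult.commute card_black_labellings_eq subset_iff)
  also have "\<dots> \<le> (\<Sum>t\<in>type_maps R D N. (\<Prod>w\<in>R. \<Prod>k<N. wt (t w k)) * card (black_labellings R tgt N t))"
    using finite_R T_sub nonneg by (intro sum_mono2 finite_type_maps) auto
  also have "\<dots> = blowup_partition R tgt D N wt"
    by (rule blowup_partition_eq_sum_type_maps[symmetric])
  finally show ?thesis .
qed

end

section \<open>The torus\<close>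

lemma Z_part_eq_blowup_partition:
  "Z_part D e v0 wt n N = blowup_partition (torus_reps n) (torus_target n e v0) D N wt"
  unfolding Z_part_def blowup_partition_def perfect_matchings_def blowup_matchings_def
    blowup_edges_def lifted_edges_def ..

lemma torus_reps_eq_image: "torus_reps n = vec_lambda ` (UNIV \<rightarrow>\<^sub>E {0..<int n})"
proof (rule set_eqI, rule iffI)
  fix w :: "int^'d" assume "w \<in> torus_reps n"
  then have "vec_nth w \<in> UNIV \<rightarrow>\<^sub>E {0..<int n}" by (auto simp: torus_reps_def)
  then show "w \<in> vec_lambda ` (UNIV \<rightarrow>\<^sub>E {0..<int n})" by (intro image_eqI[of _ _ "vec_nth w"]) simp_all
qed (auto simp: torus_reps_def)

lemma finite_torus_reps: "finite (torus_reps n :: (int^'d) set)"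
  unfolding torus_reps_eq_image by (intro finite_imageI finite_PiE) auto

lemma card_torus_reps: "card (torus_reps n :: (int^'d) set) = n ^ CARD('d)"
proof -
  have "inj_on (vec_lambda :: ('d \<Rightarrow> int) \<Rightarrow> int^'d) (UNIV \<rightarrow>\<^sub>E {0..<int n})"
    by (rule inj_onI) (simp add: vec_lambda_inject)
  then show ?thesis unfolding torus_reps_eq_image by (simp add: card_image card_PiE)
qed

lemma add_mod_cancel_on_interval:
  fixes a b c m :: int
  assumes "0 \<le> a" "a < m" "0 \<le> b" "b < m" and "(a + c) mod m = (b + c) mod m"
  shows "a = b"
proof -
  have "a mod m = b mod m"
    using assms(5) by (simp add: mod_eq_dvd_iff)
  with assms(1-4) show ?thesis by simp
qed

lemma bij_torus_target:
  assumes "n \<ge> 1"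
  shows "bij_betw (\<lambda>w. torus_target n e v0 w i) (torus_reps n) (torus_reps n)"
proof -
  have maps: "(\<lambda>w. torus_target n e v0 w i) ` torus_reps n \<subseteq> torus_reps n"
    using assms by (auto simp: torus_target_def torus_reps_def)
  have "inj_on (\<lambda>w. torus_target n e v0 w i) (torus_reps n)"
  proof (rule inj_onI)
    fix w w' assume "w \<in> torus_reps n" "w' \<in> torus_reps n"
      and "torus_target n e v0 w i = torus_target n e v0 w' i"
    then show "w = w'"
      unfolding vec_eq_iff torus_target_def torus_reps_def
      by (auto intro: add_mod_cancel_on_interval)
  qed
  with maps show ?thesis
    by (simp add: bij_betw_def endo_inj_surj finite_torus_reps)
qed

lemma tendsto_normalized_ln:
  fixes X :: "nat \<Rightarrow> real" and W :: real and D m :: nat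
  assumes W: "W > 0" and m: "m > 0"
    and lower: "\<And>N. (W ^ N / real ((N + 1) ^ D)) ^ m \<le> X N"
    and upper: "\<And>N. X N \<le> (W ^ N) ^ m"
  shows "(\<lambda>N. ln (X N) / (real N * real m)) \<longlonglongrightarrow> ln W"
proof (rule tendsto_sandwich)
  have X_pos: "X N > 0" for N
    using W by (intro order.strict_trans2[OF _ lower]) simp
  show "\<forall>\<^sub>F N in sequentially. ln W - real D * ln (real N + 1) / real N \<le> ln (X N) / (real N * real m)"
  proof (rule eventually_sequentiallyI[of 1])
    fix N :: nat assume N: "N \<ge> 1"
    have "ln W - real D * ln (real N + 1) / real N
        = ln ((W ^ N / real ((N + 1) ^ D)) ^ m) / (real N * real m)"
      using W N m by (simp add: ln_realpow ln_div field_simps)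
    also have "\<dots> \<le> ln (X N) / (real N * real m)"
      using lower[of N] W by (intro divide_right_mono ln_mono) simp_all
    finally show "ln W - real D * ln (real N + 1) / real N \<le> ln (X N) / (real N * real m)" .
  qed
  show "\<forall>\<^sub>F N in sequentially. ln (X N) / (real N * real m) \<le> ln W"
  proof (rule eventually_sequentiallyI[of 1])
    fix N :: nat assume N: "N \<ge> 1"
    have "ln (X N) \<le> ln ((W ^ N) ^ m)"
      using upper[of N] X_pos by (intro ln_mono) auto
    also have "\<dots> = real m * (real N * ln W)"
      using W by (simp add: ln_realpow)
    finally show "ln (X N) / (real N * real m) \<le> ln W"
      using N m by (simp add: field_simps)
  qed
  have "(\<lambda>N. real D * ln (real N + 1) / real N) \<longlonglongrightarrow> 0" by real_asymp
  then show "(\<lambda>N. ln W - real D * ln (real N + 1) / real N) \<longlonglongrightarrow> ln W"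
    using tendsto_diff[OF tendsto_const[of "ln W"]] by fastforce
qed (rule tendsto_const)

theorem mainTheorem1:
  fixes D :: nat and e :: "nat \<Rightarrow> real^'d" and v0 :: "real^'d" and wt :: "nat \<Rightarrow> real"
  assumes "span (e ` {..<D}) = UNIV"
    and "(\<Sum>i<D. e i) = 0"
    and "\<forall>i<D. e i - v0 \<in> Zd"
    and "inj_on e {..<D}"
    and "lattice_connected D e v0"
    and "\<forall>i<D. wt i > 0"
  shows "\<exists>L :: nat \<Rightarrow> real.
           (\<forall>n\<ge>1. (\<lambda>N. ln (Z_part D e v0 wt n N / fact N ^ (n ^ CARD('d)))
                          / (real N * real n ^ CARD('d))) \<longlonglongrightarrow> L n)
           \<and> L \<longlonglongrightarrow> ln (\<Sum>i<D. wt i)"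
proof (intro exI[of _ "\<lambda>_. ln (\<Sum>i<D. wt i)"] conjI allI impI tendsto_const)
  fix n :: nat assume n: "n \<ge> 1"
  let ?W = "\<Sum>i<D. wt i" and ?m = "n ^ CARD('d)"
  \<comment> \<open>of the hypotheses on the lattice only the spanning one is needed, to exclude D = 0\<close>
  have "D \<noteq> 0"
  proof
    assume "D = 0"
    then have "(UNIV :: (real^'d) set) = {0}" using assms(1) by simp
    then show False by (metis UNIV_I axis_eq_0_iff singletonD zero_neq_one)
  qed
  then have W: "?W > 0" using assms(6) by (intro sum_pos) auto
  have wt: "\<And>i. i < D \<Longrightarrow> 0 \<le> wt i" using assms(6) by (simp add: less_imp_le)
  interpret typed_bipartite "torus_reps n :: (int^'d) set" "torus_target n e v0" D
    using n by unfold_locales (simp_all add: finite_torus_reps bij_torus_target)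
  define X where "X N = Z_part D e v0 wt n N / fact N ^ ?m" for N
  have "(?W ^ N / real ((N + 1) ^ D)) ^ ?m \<le> X N" for N
    using blowup_partition_ge[OF wt, where N = N]
    by (simp add: X_def Z_part_eq_blowup_partition card_torus_reps pos_le_divide_eq mult.commute)
  moreover have "X N \<le> (?W ^ N) ^ ?m" for N
    using blowup_partition_le[OF wt, where N = N]
    by (simp add: X_def Z_part_eq_blowup_partition card_torus_reps pos_divide_le_eq mult.commute)
  ultimately have "(\<lambda>N. ln (X N) / (real N * real ?m)) \<longlonglongrightarrow> ln ?W"
    using n by (intro tendsto_normalized_ln[OF W]) auto
  then show "(\<lambda>N. ln (Z_part D e v0 wt n N / fact N ^ ?m) / (real N * real n ^ CARD('d))) \<longlonglongrightarrow> ln ?W"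
    by (simp add: X_def)
qed

end
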